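(* Let $T(x)=\int_{\mathbb R}e^{-\sqrt2|x-y|}\mathrm{sech}^2(y)\,dy$. For integers $k\ge1$ set (integrals over $\mathbb R$ in $x$) $p_k=\int\mathrm{sech}^k\cos$, $q_k=\int\mathrm{sech}^k\log(\mathrm{sech})\cos$, $r_k=\int\mathrm{sech}^kT\cos$, $s_k=\int\mathrm{sech}^kT\tanh\sin$, $a_k=\int x\,\mathrm{sech}^k\tanh\cos$, $b_k=\int\mathrm{sech}^k\tanh\sin$, $c_k=\int\mathrm{sech}^k\log(\mathrm{sech})\tanh\sin$, $d_k=\int x\,\mathrm{sech}^k\sin$, $e_k=\int\mathrm{sech}^k\tanh\,T'\cos$, $f_k=\int\mathrm{sech}^kT'\sin$. Then for every integer $k\ge1$: \begin{align*} b_k&=(k+1)p_{k+2}-kp_k,\\ c_k&=(k+1)q_{k+2}-kq_k+p_{k+2}-p_k,\\ d_k&=-ka_k+p_k,\\ e_k&=s_k+kr_k-(k+1)r_{k+2},\\ f_k&=-r_k+ks_k. \end{align*}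
   Context: $\mathrm{sech},\tanh,\cos,\sin$ denote the functions $\mathrm{sech}(x),\tanh(x),\cos(x),\sin(x)$, products are pointwise, primes denote $d/dx$. *)

theory Defs
  imports "HOL-Analysis.Analysis"
begin

definition sech :: "real \<Rightarrow> real" where
  "sech x = 1 / cosh x"

definition T :: "real \<Rightarrow> real" where
  "T x = integral UNIV (\<lambda>y. exp (- sqrt 2 * \<bar>x - y\<bar>) * sech y ^ 2)"

definition p :: "nat \<Rightarrow> real" where
  "p k = integral UNIV (\<lambda>x. sech x ^ k * cos x)"
definition q :: "nat \<Rightarrow> real" where
  "q k = integral UNIV (\<lambda>x. sech x ^ k * ln (sech x) * cos x)"
definition r :: "nat \<Rightarrow> real" where
  "r k = integral UNIV (\<lambda>x. sech x ^ k * T x * cos x)"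
definition s :: "nat \<Rightarrow> real" where
  "s k = integral UNIV (\<lambda>x. sech x ^ k * T x * tanh x * sin x)"
definition a :: "nat \<Rightarrow> real" where
  "a k = integral UNIV (\<lambda>x. x * sech x ^ k * tanh x * cos x)"
definition b :: "nat \<Rightarrow> real" where
  "b k = integral UNIV (\<lambda>x. sech x ^ k * tanh x * sin x)"
definition c :: "nat \<Rightarrow> real" where
  "c k = integral UNIV (\<lambda>x. sech x ^ k * ln (sech x) * tanh x * sin x)"
definition d :: "nat \<Rightarrow> real" where
  "d k = integral UNIV (\<lambda>x. x * sech x ^ k * sin x)"
definition e :: "nat \<Rightarrow> real" where
  "e k = integral UNIV (\<lambda>x. sech x ^ k * tanh x * deriv T x * cos x)"
definition f :: "nat \<Rightarrow> real" where
  "f k = integral UNIV (\<lambda>x. sech x ^ k * deriv T x * sin x)"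

end

theory Submission
  imports Defs "HOL-Real_Asymp.Real_Asymp"
begin

(* Each identity is an integration by parts on the real line: the integral of F' vanishes for
   F = sech^k * phi * beta with beta = cos or sin and phi one of tanh, ln (sech) * tanh, x,
   T * tanh, T, and F' is expanded with sech' = - sech * tanh, tanh' = sech^2 and
   tanh^2 = 1 - sech^2.  All integrals converge and the boundary terms vanish because every
   integrand is bounded by a multiple of (1 + |x|) * sech x <= 4 * exp (- |x| / 2): the factors
   phi and phi' grow at most linearly.  For T and T' this holds because T is the convolution of
   the integrable kernel exp (- sqrt 2 * |z|) with sech^2, whose derivative is bounded and
   Lipschitz; so T is differentiable, T' is the convolution of the kernel with (sech^2)', and
   both are bounded and continuous. *)

lemma sech_pos [simp]: "0 < sech x"
  by (simp add: sech_def)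

lemma sech_nonzero [simp]: "sech x \<noteq> 0"
  using sech_pos[of x] by linarith

lemma sech_nonneg [simp]: "0 \<le> sech x"
  by (rule less_imp_le[OF sech_pos])

lemma sech_le_1: "sech x \<le> 1"
  using cosh_real_ge_1[of x] by (simp add: sech_def)

lemma abs_tanh_le_1: "\<bar>tanh x\<bar> \<le> (1::real)"
  using tanh_real_bounds[of x] by auto

lemma tanh_square: "tanh x ^ 2 = 1 - sech x ^ 2"
  using sinh_square_eq[of x] by (simp add: tanh_def sech_def field_simps)

lemma continuous_on_sech [continuous_intros]:
  "continuous_on S h \<Longrightarrow> continuous_on S (\<lambda>x. sech (h x))"
  unfolding sech_def by (intro continuous_intros) auto

lemma continuous_on_tanh_real: "continuous_on UNIV (tanh :: real \<Rightarrow> real)"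
  by (intro continuous_on_tanh continuous_on_id) simp

lemma has_real_derivative_sech: "(sech has_real_derivative - sech x * tanh x) (at x)"
  unfolding sech_def[abs_def] tanh_def
  by (auto intro!: derivative_eq_intros simp: power2_eq_square field_simps)

lemma has_real_derivative_sech_power:
  "((\<lambda>y. sech y ^ n) has_real_derivative - real n * sech x ^ n * tanh x) (at x)"
  using DERIV_chain2[OF DERIV_pow has_real_derivative_sech, of n x]
  by (cases n) (simp_all add: algebra_simps)

lemma has_real_derivative_tanh: "(tanh has_real_derivative sech x ^ 2) (at x)"
  using has_field_derivative_tanh[OF _ DERIV_ident, of x] by (simp add: tanh_square)

lemma has_real_derivative_ln_sech: "((\<lambda>y. ln (sech y)) has_real_derivative - tanh x) (at x)"
  using DERIV_chain2[OF DERIV_ln has_real_derivative_sech, of x] by (simp add: field_simps)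

lemma abs_ln_sech_le: "\<bar>ln (sech x)\<bar> \<le> \<bar>x\<bar>"
proof -
  have "cosh x \<le> exp \<bar>x\<bar>"
    by (cases "x \<ge> 0") (auto simp: cosh_field_def)
  then have "ln (cosh x) \<le> \<bar>x\<bar>"
    using ln_le_cancel_iff[of "cosh x" "exp \<bar>x\<bar>"] by simp
  moreover have "0 \<le> ln (cosh x)"
    using cosh_real_ge_1[of x] by simp
  ultimately show ?thesis
    by (simp add: sech_def ln_div)
qed

lemma sech_power_le: "1 \<le> k \<Longrightarrow> sech x ^ k \<le> sech x"
  using power_decreasing[of 1 k "sech x"] sech_le_1[of x] by simp

lemma sech_le_exp: "sech x \<le> 2 * exp (- \<bar>x\<bar>)"
proof -
  have "exp \<bar>x\<bar> \<le> 2 * cosh x"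
    by (cases "x \<ge> 0") (auto simp: cosh_field_def)
  then show ?thesis
    by (simp add: sech_def exp_minus field_simps)
qed

section \<open>Integrability against sech\<close>

lemma absolutely_integrable_exp_minus_abs:
  fixes \<mu> :: real
  assumes "0 < \<mu>"
  shows "(\<lambda>x. exp (- \<mu> * \<bar>x\<bar>)) absolutely_integrable_on UNIV"
proof -
  let ?f = "\<lambda>x::real. exp (- \<mu> * \<bar>x\<bar>)"
  have "?f integrable_on {0..}"
    by (rule integrable_eq[OF integrable_on_exp_minus_to_infinity[OF assms]]) simp
  then have pos: "?f absolutely_integrable_on {0..}"
    by (intro nonnegative_absolutely_integrable_1) auto
  then have neg: "?f absolutely_integrable_on {..0}"
    using has_absolute_integral_reflect_real[of "{..0}" "{0..}" ?f "integral {0..} ?f"] by auto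
  have "{..0::real} \<union> {0..} = UNIV"
    by auto
  then show ?thesis
    using absolutely_integrable_Un[OF neg pos] by simp
qed

lemma sech_weight_le_exp: "(1 + \<bar>x\<bar>) * sech x \<le> 4 * exp (- \<bar>x\<bar> / 2)"
proof -
  have "1 + \<bar>x\<bar> \<le> 2 * exp (\<bar>x\<bar> / 2)"
    using exp_ge_add_one_self[of "\<bar>x\<bar> / 2"] by linarith
  then have "(1 + \<bar>x\<bar>) * sech x \<le> (2 * exp (\<bar>x\<bar> / 2)) * (2 * exp (- \<bar>x\<bar>))"
    by (intro mult_mono sech_le_exp) auto
  also have "\<dots> = 4 * exp (- \<bar>x\<bar> / 2)"
    by (simp flip: exp_add)
  finally show ?thesis .
qed

lemma sech_weight_integrable: "(\<lambda>x. (1 + \<bar>x\<bar>) * sech x) integrable_on UNIV"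
proof (rule measurable_bounded_by_integrable_imp_integrable)
  show "(\<lambda>x. (1 + \<bar>x\<bar>) * sech x) \<in> borel_measurable (lebesgue_on UNIV)"
    by (intro continuous_imp_measurable_on_sets_lebesgue continuous_intros) auto
  have "(\<lambda>x::real. exp (- (1/2) * \<bar>x\<bar>)) integrable_on UNIV"
    by (rule set_lebesgue_integral_eq_integral(1)[OF absolutely_integrable_exp_minus_abs]) simp
  then show "(\<lambda>x::real. 4 * exp (- (1/2) * \<bar>x\<bar>)) integrable_on UNIV"
    by (rule integrable_on_mult_right)
  show "norm ((1 + \<bar>x\<bar>) * sech x) \<le> 4 * exp (- (1/2) * \<bar>x\<bar>)" for x
    using sech_weight_le_exp[of x] by (simp add: abs_mult)
qed auto

lemma sech_weight_tendsto_0: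
  "((\<lambda>x. (1 + \<bar>x\<bar>) * sech x) \<longlongrightarrow> 0) at_top"
  "((\<lambda>x. (1 + \<bar>x\<bar>) * sech x) \<longlongrightarrow> 0) at_bot"
  unfolding sech_def cosh_field_def by real_asymp+

definition linear_growth :: "(real \<Rightarrow> real) \<Rightarrow> bool" where
  "linear_growth \<phi> \<longleftrightarrow> continuous_on UNIV \<phi> \<and> (\<exists>M. \<forall>x. \<bar>\<phi> x\<bar> \<le> M * (1 + \<bar>x\<bar>))"

lemma linear_growth_bounded:
  assumes "continuous_on UNIV \<phi>" "\<And>x. \<bar>\<phi> x\<bar> \<le> M"
  shows "linear_growth \<phi>"
proof -
  have "0 \<le> M"
    using assms(2)[of 0] by linarith
  then have "\<bar>\<phi> x\<bar> \<le> M * (1 + \<bar>x\<bar>)" for x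
    using assms(2)[of x] mult_left_mono[of 1 "1 + \<bar>x\<bar>" M] by simp
  then show ?thesis
    using assms(1) by (auto simp: linear_growth_def)
qed

lemma linear_growth_ident: "linear_growth (\<lambda>x. x)"
  unfolding linear_growth_def by (intro conjI exI[of _ 1] allI continuous_on_id) simp

lemma linear_growth_const: "linear_growth (\<lambda>_. C)"
  by (rule linear_growth_bounded[of _ "\<bar>C\<bar>"]) auto

lemma linear_growth_tanh: "linear_growth tanh"
  by (rule linear_growth_bounded[OF continuous_on_tanh_real abs_tanh_le_1])

lemma linear_growth_ln_sech: "linear_growth (\<lambda>x. ln (sech x))"
proof -
  have "\<bar>ln (sech x)\<bar> \<le> 1 * (1 + \<bar>x\<bar>)" for x
    using abs_ln_sech_le[of x] by simp
  moreover have "continuous_on UNIV (\<lambda>x. ln (sech x))"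
    by (intro continuous_intros) auto
  ultimately show ?thesis
    unfolding linear_growth_def by blast
qed

lemma linear_growth_mult_bounded:
  assumes "linear_growth \<phi>" "continuous_on UNIV \<beta>" "\<And>x. \<bar>\<beta> x\<bar> \<le> 1"
  shows "linear_growth (\<lambda>x. \<phi> x * \<beta> x)"
proof -
  obtain M where M: "\<And>x. \<bar>\<phi> x\<bar> \<le> M * (1 + \<bar>x\<bar>)" and "continuous_on UNIV \<phi>"
    using assms(1) by (auto simp: linear_growth_def)
  moreover have "\<bar>\<phi> x * \<beta> x\<bar> \<le> M * (1 + \<bar>x\<bar>)" for x
  proof -
    have "\<bar>\<phi> x\<bar> * \<bar>\<beta> x\<bar> \<le> M * (1 + \<bar>x\<bar>) * 1"
      by (rule mult_mono[OF M assms(3)]) (use abs_ge_zero[of "\<phi> x"] M[of x] in linarith)+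
    then show ?thesis
      by (simp add: abs_mult)
  qed
  ultimately show ?thesis
    using assms(2) unfolding linear_growth_def by (blast intro: continuous_on_mult)
qed

lemma sech_power_mult_decay:
  assumes "1 \<le> k" "linear_growth \<phi>" "continuous_on UNIV \<beta>" "\<And>x. \<bar>\<beta> x\<bar> \<le> 1"
  shows integrable_sech_power_mult: "(\<lambda>x. sech x ^ k * \<phi> x * \<beta> x) integrable_on UNIV"
    and sech_power_mult_tendsto_at_top: "((\<lambda>x. sech x ^ k * \<phi> x * \<beta> x) \<longlongrightarrow> 0) at_top"
    and sech_power_mult_tendsto_at_bot: "((\<lambda>x. sech x ^ k * \<phi> x * \<beta> x) \<longlongrightarrow> 0) at_bot"
proof -
  obtain M where M: "\<And>x. \<bar>\<phi> x\<bar> \<le> M * (1 + \<bar>x\<bar>)" and cont: "continuous_on UNIV \<phi>"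
    using assms(2) by (auto simp: linear_growth_def)
  have bound: "norm (sech x ^ k * \<phi> x * \<beta> x) \<le> M * ((1 + \<bar>x\<bar>) * sech x)" for x
  proof -
    have "sech x ^ k \<le> sech x"
      using assms(1) by (rule sech_power_le)
    moreover have "0 \<le> M * (1 + \<bar>x\<bar>)"
      using M[of x] abs_ge_zero[of "\<phi> x"] by linarith
    ultimately have "sech x ^ k * (\<bar>\<phi> x\<bar> * \<bar>\<beta> x\<bar>) \<le> sech x * (M * (1 + \<bar>x\<bar>) * 1)"
      by (intro mult_mono M assms(4)) auto
    then show ?thesis
      by (simp add: abs_mult power_abs mult_ac)
  qed
  show "(\<lambda>x. sech x ^ k * \<phi> x * \<beta> x) integrable_on UNIV"
  proof (rule measurable_bounded_by_integrable_imp_integrable)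
    show "(\<lambda>x. sech x ^ k * \<phi> x * \<beta> x) \<in> borel_measurable (lebesgue_on UNIV)"
      by (intro continuous_imp_measurable_on_sets_lebesgue continuous_intros cont assms(3)) auto
  qed (use bound integrable_on_mult_right[OF sech_weight_integrable] in auto)
  show "((\<lambda>x. sech x ^ k * \<phi> x * \<beta> x) \<longlongrightarrow> 0) at_top"
    by (rule Lim_null_comparison[OF always_eventually tendsto_mult_right_zero[OF sech_weight_tendsto_0(1)]])
      (use bound in blast)
  show "((\<lambda>x. sech x ^ k * \<phi> x * \<beta> x) \<longlongrightarrow> 0) at_bot"
    by (rule Lim_null_comparison[OF always_eventually tendsto_mult_right_zero[OF sech_weight_tendsto_0(2)]])
      (use bound in blast)
qed

section \<open>Integration by parts on the real line\<close>

lemma tendsto_integral_symmetric_intervals: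
  fixes g :: "real \<Rightarrow> real"
  assumes "g integrable_on UNIV"
  shows "(\<lambda>n. integral {- real n..real n} g) \<longlonglongrightarrow> integral UNIV g"
proof (rule LIMSEQ_I)
  fix \<epsilon> :: real
  assume "0 < \<epsilon>"
  moreover have "(g has_integral integral UNIV g) UNIV"
    using assms by (rule integrable_integral)
  ultimately obtain B where B: "\<And>u v. ball 0 B \<subseteq> cbox u v \<Longrightarrow>
      norm (integral (cbox u v) g - integral UNIV g) < \<epsilon>"
    unfolding has_integral_alt' by force
  obtain N :: nat where "B < real N"
    using reals_Archimedean2 by blast
  then have "norm (integral {- real n..real n} g - integral UNIV g) < \<epsilon>" if "N \<le> n" for n
    using B[of "- real n" "real n"] that by (force simp: dist_real_def)
  then show "\<exists>N. \<forall>n\<ge>N. norm (integral {- real n..real n} g - integral UNIV g) < \<epsilon>"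
    by blast
qed

lemma has_integral_derivative_vanishing_at_infinity:
  fixes G g :: "real \<Rightarrow> real"
  assumes G: "\<And>x. (G has_real_derivative g x) (at x)" and g: "(g has_integral I) UNIV"
    and "(G \<longlongrightarrow> 0) at_top" "(G \<longlongrightarrow> 0) at_bot"
  shows "I = 0"
proof -
  have "integral {- real n..real n} g = G (real n) - G (- real n)" for n
    by (intro integral_unique fundamental_theorem_of_calculus)
      (auto intro: has_field_derivative_at_within G simp flip: has_real_derivative_iff_has_vector_derivative)
  moreover have "(\<lambda>n. integral {- real n..real n} g) \<longlonglongrightarrow> I"
    using tendsto_integral_symmetric_intervals[OF has_integral_integrable[OF g]]
    by (simp add: integral_unique[OF g])
  moreover have "(\<lambda>n. G (real n) - G (- real n)) \<longlonglongrightarrow> 0 - 0"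
    using filterlim_real_sequentially
    by (intro tendsto_diff filterlim_compose[OF assms(3)] filterlim_compose[OF assms(4)])
      (auto simp: filterlim_uminus_at_bot)
  ultimately show ?thesis
    using LIMSEQ_unique by force
qed

text \<open>The integrand is the derivative of \<open>sech x ^ k * \<phi> x * \<beta> x\<close>.\<close>

lemma sech_power_by_parts:
  assumes k: "1 \<le> k"
    and \<phi>: "linear_growth \<phi>" "\<And>x. (\<phi> has_real_derivative \<phi>' x) (at x)"
    and \<beta>: "continuous_on UNIV \<beta>" "\<And>x. \<bar>\<beta> x\<bar> \<le> 1" "\<And>x. (\<beta> has_real_derivative \<beta>' x) (at x)"
    and g: "\<And>x. sech x ^ k * (\<phi>' x * \<beta> x + \<phi> x * \<beta>' x - real k * tanh x * \<phi> x * \<beta> x) = g x"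
    and I: "(g has_integral I) UNIV"
  shows "I = 0"
proof (rule has_integral_derivative_vanishing_at_infinity[OF _ I])
  show "((\<lambda>x. sech x ^ k * \<phi> x * \<beta> x) has_real_derivative g x) (at x)" for x
    unfolding g[symmetric]
    by (rule DERIV_cong[OF DERIV_mult[OF DERIV_mult[OF has_real_derivative_sech_power \<phi>(2)] \<beta>(3)]])
      (simp add: algebra_simps)
qed (rule sech_power_mult_tendsto_at_top sech_power_mult_tendsto_at_bot; fact)+

section \<open>Convolution with an integrable kernel\<close>

lemma taylor_remainder_lipschitz:
  fixes h h' :: "real \<Rightarrow> real"
  assumes h: "\<And>x. (h has_real_derivative h' x) (at x)" and L: "L-lipschitz_on UNIV h'"
  shows "\<bar>h (u + t) - h u - t * h' u\<bar> \<le> L * t\<^sup>2"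
proof -
  let ?S = "{u - \<bar>t\<bar> .. u + \<bar>t\<bar>}"
  have "norm ((h (u + t) - (u + t) * h' u) - (h u - u * h' u)) \<le> (L * \<bar>t\<bar>) * norm ((u + t) - u)"
  proof (rule field_differentiable_bound[of ?S])
    show "((\<lambda>s. h s - s * h' u) has_field_derivative h' s - h' u) (at s within ?S)" for s
      by (auto intro!: derivative_eq_intros h[THEN has_field_derivative_at_within])
    show "norm (h' s - h' u) \<le> L * \<bar>t\<bar>" if "s \<in> ?S" for s
    proof -
      have "\<bar>h' s - h' u\<bar> \<le> L * \<bar>s - u\<bar>"
        using lipschitz_onD[OF L, of s u] by (simp add: dist_real_def)
      also have "\<dots> \<le> L * \<bar>t\<bar>"
        using that lipschitz_on_nonneg[OF L] by (intro mult_left_mono) auto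
      finally show ?thesis
        by simp
    qed
  qed auto
  then show ?thesis
    by (simp add: algebra_simps power2_eq_square abs_mult)
qed

lemma lipschitz_on_bounded_derivative:
  fixes g g' :: "real \<Rightarrow> real"
  assumes "\<And>x. (g has_real_derivative g' x) (at x)" "\<And>x. \<bar>g' x\<bar> \<le> B"
  shows "B-lipschitz_on UNIV g"
proof (rule lipschitz_onI)
  show "dist (g x) (g y) \<le> B * dist x y" for x y
    using field_differentiable_bound[of UNIV g g' B x y] assms
    by (auto simp: dist_real_def intro: has_field_derivative_at_within)
  show "0 \<le> B"
    using assms(2)[of 0] by linarith
qed

definition convolution :: "(real \<Rightarrow> real) \<Rightarrow> (real \<Rightarrow> real) \<Rightarrow> real \<Rightarrow> real" where
  "convolution K h x = integral UNIV (\<lambda>z. K z * h (x - z))"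

context
  fixes K :: "real \<Rightarrow> real"
  assumes kernel_nonneg: "\<And>z. 0 \<le> K z" and kernel_integrable: "K integrable_on UNIV"
begin

lemma convolution_integrand_integrable:
  assumes "continuous_on UNIV h" "\<And>u. \<bar>h u\<bar> \<le> M"
  shows "(\<lambda>z. K z * h (x - z)) integrable_on UNIV"
proof -
  have "(\<lambda>z. h (x - z) * K z) absolutely_integrable_on UNIV"
  proof (rule absolutely_integrable_bounded_measurable_product_real)
    show "(\<lambda>z. h (x - z)) \<in> borel_measurable (lebesgue_on UNIV)"
      by (intro continuous_imp_measurable_on_sets_lebesgue continuous_on_compose2[OF assms(1)]
          continuous_intros) auto
    show "bounded (range (\<lambda>z. h (x - z)))"
      using assms(2) by (auto simp: bounded_iff)
    show "K absolutely_integrable_on UNIV"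
      using kernel_integrable kernel_nonneg by (intro nonnegative_absolutely_integrable_1) auto
  qed auto
  then show ?thesis
    using set_lebesgue_integral_eq_integral(1) by (simp add: mult.commute)
qed

lemma abs_integral_le_kernel:
  assumes "g integrable_on UNIV" "\<And>z. \<bar>g z\<bar> \<le> K z * M"
  shows "\<bar>integral UNIV g\<bar> \<le> M * integral UNIV K"
proof -
  have "norm (integral UNIV g) \<le> integral UNIV (\<lambda>z. K z * M)"
    using assms integrable_on_mult_left[OF kernel_integrable] by (intro integral_norm_bound_integral) auto
  then show ?thesis
    by (simp add: mult.commute)
qed

lemma abs_convolution_le:
  assumes "continuous_on UNIV h" "\<And>u. \<bar>h u\<bar> \<le> M"
  shows "\<bar>convolution K h x\<bar> \<le> M * integral UNIV K"
  unfolding convolution_def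
proof (rule abs_integral_le_kernel[OF convolution_integrand_integrable[OF assms]])
  show "\<bar>K z * h (x - z)\<bar> \<le> K z * M" for z
    using assms(2) kernel_nonneg[of z] by (simp add: abs_mult mult_left_mono)
qed

lemma convolution_lipschitz:
  assumes "continuous_on UNIV h" "\<And>u. \<bar>h u\<bar> \<le> M" "L-lipschitz_on UNIV h"
  shows "(L * integral UNIV K)-lipschitz_on UNIV (convolution K h)"
proof (rule lipschitz_onI)
  fix x y :: real
  have "convolution K h x - convolution K h y = integral UNIV (\<lambda>z. K z * h (x - z) - K z * h (y - z))"
    unfolding convolution_def
    by (rule integral_diff[symmetric]) (intro convolution_integrand_integrable[OF assms(1,2)])+
  also have "\<bar>\<dots>\<bar> \<le> (L * \<bar>x - y\<bar>) * integral UNIV K"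
  proof (rule abs_integral_le_kernel)
    show "(\<lambda>z. K z * h (x - z) - K z * h (y - z)) integrable_on UNIV"
      by (intro integrable_diff convolution_integrand_integrable[OF assms(1,2)])
    show "\<bar>K z * h (x - z) - K z * h (y - z)\<bar> \<le> K z * (L * \<bar>x - y\<bar>)" for z
      using lipschitz_onD[OF assms(3), of "x - z" "y - z"] kernel_nonneg[of z]
      by (simp add: abs_mult dist_real_def mult_left_mono flip: right_diff_distrib)
  qed
  finally show "dist (convolution K h x) (convolution K h y) \<le> L * integral UNIV K * dist x y"
    by (simp add: dist_real_def mult_ac)
  show "0 \<le> L * integral UNIV K"
    using lipschitz_on_nonneg[OF assms(3)] integral_nonneg[OF kernel_integrable] kernel_nonneg by simp
qed

lemma convolution_has_derivative:
  assumes h: "\<And>u. (h has_real_derivative h' u) (at u)" "\<And>u. \<bar>h u\<bar> \<le> M"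
    and h': "\<And>u. \<bar>h' u\<bar> \<le> M'" "L-lipschitz_on UNIV h'"
  shows "(convolution K h has_real_derivative convolution K h' x) (at x)"
proof -
  have "continuous_on UNIV h"
    by (rule continuous_at_imp_continuous_on) (use DERIV_isCont[OF h(1)] in blast)
  moreover have "continuous_on UNIV h'"
    by (rule lipschitz_on_continuous_on[OF h'(2)])
  ultimately have int: "(\<lambda>z. K z * h (y - z)) integrable_on UNIV"
    "(\<lambda>z. K z * h' (y - z)) integrable_on UNIV" for y
    using convolution_integrand_integrable h(2) h'(1) by blast+
  have key: "\<bar>convolution K h (x + t) - convolution K h x - t * convolution K h' x\<bar>
      \<le> (L * t\<^sup>2) * integral UNIV K" for t
  proof -
    have "convolution K h (x + t) - convolution K h x - t * convolution K h' x =
        integral UNIV (\<lambda>z. K z * h (x + t - z) - K z * h (x - z) - t * (K z * h' (x - z)))"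
      unfolding convolution_def using int
      by (simp add: integral_diff integrable_diff integrable_on_mult_right)
    also have "\<bar>\<dots>\<bar> \<le> (L * t\<^sup>2) * integral UNIV K"
    proof (rule abs_integral_le_kernel)
      show "(\<lambda>z. K z * h (x + t - z) - K z * h (x - z) - t * (K z * h' (x - z))) integrable_on UNIV"
        using int by (intro integrable_diff integrable_on_mult_right)
      fix z
      have "\<bar>h (x - z + t) - h (x - z) - t * h' (x - z)\<bar> \<le> L * t\<^sup>2"
        by (rule taylor_remainder_lipschitz[OF h(1) h'(2)])
      moreover have "K z * h (x + t - z) - K z * h (x - z) - t * (K z * h' (x - z))
          = K z * (h (x - z + t) - h (x - z) - t * h' (x - z))"
        by (simp add: algebra_simps)
      ultimately show "\<bar>K z * h (x + t - z) - K z * h (x - z) - t * (K z * h' (x - z))\<bar> \<le> K z * (L * t\<^sup>2)"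
        using kernel_nonneg[of z] by (simp add: abs_mult mult_left_mono)
    qed
    finally show ?thesis .
  qed
  have bound: "norm ((convolution K h (x + t) - convolution K h x) / t - convolution K h' x)
      \<le> \<bar>t\<bar> * (L * integral UNIV K)" if "t \<noteq> 0" for t
  proof -
    have "(convolution K h (x + t) - convolution K h x) / t - convolution K h' x
        = (convolution K h (x + t) - convolution K h x - t * convolution K h' x) / t"
      using that by (simp add: field_simps)
    moreover have "(L * t\<^sup>2) * integral UNIV K / \<bar>t\<bar> = \<bar>t\<bar> * (L * integral UNIV K)"
      using that by (simp add: power2_eq_square field_simps)
    ultimately show ?thesis
      using divide_right_mono[OF key[of t], of "\<bar>t\<bar>"] by (simp add: abs_div)
  qed
  have "((\<lambda>t. (convolution K h (x + t) - convolution K h x) / t - convolution K h' x) \<longlongrightarrow> 0) (at 0)"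
  proof (rule Lim_null_comparison)
    show "\<forall>\<^sub>F t in at 0. norm ((convolution K h (x + t) - convolution K h x) / t - convolution K h' x)
        \<le> \<bar>t\<bar> * (L * integral UNIV K)"
      unfolding eventually_at_filter by (intro always_eventually allI impI bound)
    show "((\<lambda>t. \<bar>t\<bar> * (L * integral UNIV K)) \<longlongrightarrow> 0) (at 0)"
      by (intro tendsto_mult_left_zero tendsto_rabs_zero tendsto_ident_at)
  qed
  then show ?thesis
    unfolding DERIV_def by (rule LIM_zero_cancel)
qed

end

section \<open>The function T\<close>

lemma integral_reflect_shift_UNIV:
  fixes g :: "real \<Rightarrow> real"
  assumes "g absolutely_integrable_on UNIV"
  shows "integral UNIV (\<lambda>z. g (x - z)) = integral UNIV g"
proof -
  have "((\<lambda>z. x - z) has_real_derivative - 1) (at z within UNIV)" for z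
    by (auto intro!: derivative_eq_intros)
  moreover have "inj_on (\<lambda>z. x - z) UNIV"
    by (auto intro: inj_onI)
  moreover have "y \<in> range (\<lambda>z. x - z)" for y
    by (rule range_eqI[of _ _ "x - y"]) simp
  then have "range (\<lambda>z. x - z) = UNIV"
    by blast
  ultimately show ?thesis
    using has_absolute_integral_change_of_variables_1'[of UNIV "\<lambda>z. x - z" "\<lambda>_. - 1" g "integral UNIV g"]
      assms by simp
qed

definition T_kernel :: "real \<Rightarrow> real" where
  "T_kernel z = exp (- sqrt 2 * \<bar>z\<bar>)"

lemma T_kernel_nonneg: "0 \<le> T_kernel z"
  by (simp add: T_kernel_def)

lemma T_kernel_integrable: "T_kernel integrable_on UNIV"
  unfolding T_kernel_def[abs_def]
  by (rule set_lebesgue_integral_eq_integral(1)[OF absolutely_integrable_exp_minus_abs]) simp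

lemma T_eq_convolution: "T = convolution T_kernel (\<lambda>y. sech y ^ 2)"
proof
  fix x
  let ?f = "\<lambda>y. T_kernel (x - y) * sech y ^ 2"
  have "?f absolutely_integrable_on UNIV"
  proof (rule measurable_bounded_by_integrable_imp_absolutely_integrable[OF _ _ sech_weight_integrable])
    show "?f \<in> borel_measurable (lebesgue_on UNIV)"
      unfolding T_kernel_def
      by (intro continuous_imp_measurable_on_sets_lebesgue continuous_intros) auto
    show "norm (?f y) \<le> (1 + \<bar>y\<bar>) * sech y" for y
    proof -
      have "norm (?f y) = T_kernel (x - y) * sech y ^ 2"
        using T_kernel_nonneg[of "x - y"] by (simp add: abs_mult)
      also have "\<dots> \<le> 1 * sech y"
        using sech_power_le[of 2 y] by (intro mult_mono) (auto simp: T_kernel_def)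
      also have "\<dots> \<le> (1 + \<bar>y\<bar>) * sech y"
        by (intro mult_right_mono) auto
      finally show ?thesis .
    qed
  qed auto
  then show "T x = convolution T_kernel (\<lambda>y. sech y ^ 2) x"
    using integral_reflect_shift_UNIV[of ?f x]
    by (simp add: T_def convolution_def T_kernel_def abs_minus_commute)
qed

lemma sech_square_derivative_lipschitz: "6-lipschitz_on UNIV (\<lambda>y. - 2 * sech y ^ 2 * tanh y)"
proof (rule lipschitz_on_bounded_derivative)
  show "((\<lambda>y. - 2 * sech y ^ 2 * tanh y) has_real_derivative
      - 2 * (- 2 * sech x ^ 2 * tanh x * tanh x + sech x ^ 2 * sech x ^ 2)) (at x)" for x
    using DERIV_cmult[OF DERIV_mult[OF has_real_derivative_sech_power has_real_derivative_tanh], of "- 2" 2 x]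
    by (simp add: mult.assoc)
  show "\<bar>- 2 * (- 2 * sech x ^ 2 * tanh x * tanh x + sech x ^ 2 * sech x ^ 2)\<bar> \<le> 6" for x
  proof -
    have "- 2 * (- 2 * sech x ^ 2 * tanh x * tanh x + sech x ^ 2 * sech x ^ 2)
        = 4 * sech x ^ 2 - 6 * sech x ^ 4"
      using tanh_square[of x] by algebra
    moreover have "0 \<le> sech x ^ 2" "sech x ^ 2 \<le> 1" "0 \<le> sech x ^ 4" "sech x ^ 4 \<le> 1"
      using sech_le_1[of x] by (auto intro: power_le_one)
    ultimately show ?thesis
      unfolding abs_le_iff by (intro conjI) linarith+
  qed
qed

lemma abs_sech_square_derivative_le: "\<bar>- 2 * sech y ^ 2 * tanh y\<bar> \<le> 2"
  using sech_power_le[of 2 y] sech_le_1[of y] abs_tanh_le_1[of y] by (simp add: abs_mult mult_le_one)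

lemma has_real_derivative_T_convolution:
  "(T has_real_derivative convolution T_kernel (\<lambda>y. - 2 * sech y ^ 2 * tanh y) x) (at x)"
  unfolding T_eq_convolution
proof (rule convolution_has_derivative[OF T_kernel_nonneg T_kernel_integrable])
  show "((\<lambda>y. sech y ^ 2) has_real_derivative - 2 * sech u ^ 2 * tanh u) (at u)" for u
    using has_real_derivative_sech_power[of 2 u] by simp
  show "\<bar>sech u ^ 2\<bar> \<le> 1" for u
    using sech_power_le[of 2 u] sech_le_1[of u] by simp
qed (rule abs_sech_square_derivative_le sech_square_derivative_lipschitz)+

lemma deriv_T: "deriv T = convolution T_kernel (\<lambda>y. - 2 * sech y ^ 2 * tanh y)"
  using has_real_derivative_T_convolution DERIV_imp_deriv by blast

lemma has_real_derivative_T: "(T has_real_derivative deriv T x) (at x)"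
  unfolding deriv_T by (rule has_real_derivative_T_convolution)

lemma linear_growth_T: "linear_growth T"
proof (rule linear_growth_bounded)
  show "continuous_on UNIV T"
    by (rule continuous_at_imp_continuous_on) (use DERIV_isCont[OF has_real_derivative_T] in blast)
  show "\<bar>T x\<bar> \<le> 1 * integral UNIV T_kernel" for x
    unfolding T_eq_convolution
    using sech_power_le[of 2] sech_le_1
    by (intro abs_convolution_le T_kernel_nonneg T_kernel_integrable continuous_intros) (auto intro: order_trans)
qed

lemma linear_growth_deriv_T: "linear_growth (deriv T)"
  unfolding deriv_T
proof (rule linear_growth_bounded)
  have "continuous_on UNIV (\<lambda>y. - 2 * sech y ^ 2 * tanh y)"
    by (intro continuous_intros) auto
  note conv_facts = T_kernel_nonneg T_kernel_integrable this abs_sech_square_derivative_le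
  show "continuous_on UNIV (convolution T_kernel (\<lambda>y. - 2 * sech y ^ 2 * tanh y))"
    by (rule lipschitz_on_continuous_on[OF convolution_lipschitz[OF conv_facts sech_square_derivative_lipschitz]])
  show "\<bar>convolution T_kernel (\<lambda>y. - 2 * sech y ^ 2 * tanh y) x\<bar> \<le> 2 * integral UNIV T_kernel" for x
    by (rule abs_convolution_le[OF conv_facts])
qed

lemma
  assumes "1 \<le> n"
  shows has_integral_p: "((\<lambda>x. sech x ^ n * cos x) has_integral p n) UNIV"
    and has_integral_q: "((\<lambda>x. sech x ^ n * ln (sech x) * cos x) has_integral q n) UNIV"
    and has_integral_r: "((\<lambda>x. sech x ^ n * T x * cos x) has_integral r n) UNIV"
    and has_integral_s: "((\<lambda>x. sech x ^ n * T x * tanh x * sin x) has_integral s n) UNIV"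
    and has_integral_a: "((\<lambda>x. x * sech x ^ n * tanh x * cos x) has_integral a n) UNIV"
    and has_integral_b: "((\<lambda>x. sech x ^ n * tanh x * sin x) has_integral b n) UNIV"
    and has_integral_c: "((\<lambda>x. sech x ^ n * ln (sech x) * tanh x * sin x) has_integral c n) UNIV"
    and has_integral_d: "((\<lambda>x. x * sech x ^ n * sin x) has_integral d n) UNIV"
    and has_integral_e: "((\<lambda>x. sech x ^ n * tanh x * deriv T x * cos x) has_integral e n) UNIV"
    and has_integral_f: "((\<lambda>x. sech x ^ n * deriv T x * sin x) has_integral f n) UNIV"
proof -
  have int: "(\<lambda>x. sech x ^ n * \<phi> x * \<beta> x) integrable_on UNIV"
    if "linear_growth \<phi>" "\<beta> \<in> {cos, sin, \<lambda>x. tanh x * cos x, \<lambda>x. tanh x * sin x}" for \<phi> \<beta>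
  proof (rule integrable_sech_power_mult[OF assms \<open>linear_growth \<phi>\<close>])
    show "continuous_on UNIV \<beta>"
      using that(2) by (auto intro!: continuous_intros)
    show "\<bar>\<beta> x\<bar> \<le> 1" for x
      using that(2) abs_tanh_le_1[of x] by (auto simp: abs_mult intro!: mult_le_one)
  qed
  note growth = linear_growth_const[of 1] linear_growth_ln_sech linear_growth_T linear_growth_ident
    linear_growth_deriv_T
  show "((\<lambda>x. sech x ^ n * cos x) has_integral p n) UNIV"
    using int[OF growth(1), of cos] by (simp add: p_def integrable_integral)
  show "((\<lambda>x. sech x ^ n * ln (sech x) * cos x) has_integral q n) UNIV"
    using int[OF growth(2), of cos] by (simp add: q_def integrable_integral)
  show "((\<lambda>x. sech x ^ n * T x * cos x) has_integral r n) UNIV"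
    using int[OF growth(3), of cos] by (simp add: r_def integrable_integral)
  show "((\<lambda>x. sech x ^ n * T x * tanh x * sin x) has_integral s n) UNIV"
    using int[OF growth(3), of "\<lambda>x. tanh x * sin x"] by (simp add: s_def integrable_integral mult_ac)
  show "((\<lambda>x. x * sech x ^ n * tanh x * cos x) has_integral a n) UNIV"
    using int[OF growth(4), of "\<lambda>x. tanh x * cos x"] by (simp add: a_def integrable_integral mult_ac)
  show "((\<lambda>x. sech x ^ n * tanh x * sin x) has_integral b n) UNIV"
    using int[OF growth(1), of "\<lambda>x. tanh x * sin x"] by (simp add: b_def integrable_integral mult_ac)
  show "((\<lambda>x. sech x ^ n * ln (sech x) * tanh x * sin x) has_integral c n) UNIV"
    using int[OF growth(2), of "\<lambda>x. tanh x * sin x"] by (simp add: c_def integrable_integral mult_ac)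
  show "((\<lambda>x. x * sech x ^ n * sin x) has_integral d n) UNIV"
    using int[OF growth(4), of sin] by (simp add: d_def integrable_integral mult_ac)
  show "((\<lambda>x. sech x ^ n * tanh x * deriv T x * cos x) has_integral e n) UNIV"
    using int[OF growth(5), of "\<lambda>x. tanh x * cos x"] by (simp add: e_def integrable_integral mult_ac)
  show "((\<lambda>x. sech x ^ n * deriv T x * sin x) has_integral f n) UNIV"
    using int[OF growth(5), of sin] by (simp add: f_def integrable_integral)
qed

lemma b_in_terms_of_p:
  assumes k: "1 \<le> k"
  shows "b k = real (k + 1) * p (k + 2) - real k * p k"
proof -
  have "sech x ^ k * (sech x ^ 2 * cos x + tanh x * - sin x - real k * tanh x * tanh x * cos x)
      = real (k + 1) * (sech x ^ (k + 2) * cos x) - real k * (sech x ^ k * cos x)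
        - sech x ^ k * tanh x * sin x" for x
  proof -
    \<comment> \<open>\<open>algebra\<close> cannot handle the symbolic exponent \<open>k\<close>, so \<open>sech x ^ k\<close> is abstracted.\<close>
    define u where "u = sech x ^ k"
    show ?thesis
      unfolding power_add of_nat_add of_nat_1 u_def[symmetric] using tanh_square[of x] by algebra
  qed
  moreover have "((\<lambda>x. real (k + 1) * (sech x ^ (k + 2) * cos x) - real k * (sech x ^ k * cos x)
      - sech x ^ k * tanh x * sin x) has_integral real (k + 1) * p (k + 2) - real k * p k - b k) UNIV"
    using k by (intro has_integral_diff has_integral_mult_right has_integral_p has_integral_b) auto
  ultimately have "real (k + 1) * p (k + 2) - real k * p k - b k = 0"
    by (rule sech_power_by_parts[OF k linear_growth_tanh has_real_derivative_tanh
          continuous_on_cos[OF continuous_on_id] abs_cos_le_one DERIV_cos])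
  then show ?thesis
    by simp
qed

lemma c_in_terms_of_q_p:
  assumes k: "1 \<le> k"
  shows "c k = real (k + 1) * q (k + 2) - real k * q k + p (k + 2) - p k"
proof -
  have "sech x ^ k * ((- tanh x * tanh x + sech x ^ 2 * ln (sech x)) * cos x
        + ln (sech x) * tanh x * - sin x - real k * tanh x * (ln (sech x) * tanh x) * cos x)
      = real (k + 1) * (sech x ^ (k + 2) * ln (sech x) * cos x) - real k * (sech x ^ k * ln (sech x) * cos x)
        + sech x ^ (k + 2) * cos x - sech x ^ k * cos x - sech x ^ k * ln (sech x) * tanh x * sin x" for x
  proof -
    define u where "u = sech x ^ k"
    show ?thesis
      unfolding power_add of_nat_add of_nat_1 u_def[symmetric] using tanh_square[of x] by algebra
  qed
  moreover have "((\<lambda>x. real (k + 1) * (sech x ^ (k + 2) * ln (sech x) * cos x)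
      - real k * (sech x ^ k * ln (sech x) * cos x) + sech x ^ (k + 2) * cos x - sech x ^ k * cos x
      - sech x ^ k * ln (sech x) * tanh x * sin x)
      has_integral real (k + 1) * q (k + 2) - real k * q k + p (k + 2) - p k - c k) UNIV"
    using k by (intro has_integral_diff has_integral_add has_integral_mult_right has_integral_p
        has_integral_q has_integral_c) auto
  ultimately have "real (k + 1) * q (k + 2) - real k * q k + p (k + 2) - p k - c k = 0"
    by (rule sech_power_by_parts[OF k
          linear_growth_mult_bounded[OF linear_growth_ln_sech continuous_on_tanh_real abs_tanh_le_1]
          DERIV_mult[OF has_real_derivative_ln_sech has_real_derivative_tanh]
          continuous_on_cos[OF continuous_on_id] abs_cos_le_one DERIV_cos])
  then show ?thesis
    by simp
qed

lemma d_in_terms_of_a_p: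
  assumes k: "1 \<le> k"
  shows "d k = - real k * a k + p k"
proof -
  have "sech x ^ k * (1 * cos x + x * - sin x - real k * tanh x * x * cos x)
      = sech x ^ k * cos x - x * sech x ^ k * sin x - real k * (x * sech x ^ k * tanh x * cos x)" for x
    by (simp add: algebra_simps)
  moreover have "((\<lambda>x. sech x ^ k * cos x - x * sech x ^ k * sin x
      - real k * (x * sech x ^ k * tanh x * cos x)) has_integral p k - d k - real k * a k) UNIV"
    using k by (intro has_integral_diff has_integral_mult_right has_integral_p has_integral_d
        has_integral_a) auto
  ultimately have "p k - d k - real k * a k = 0"
    by (rule sech_power_by_parts[OF k linear_growth_ident DERIV_ident
          continuous_on_cos[OF continuous_on_id] abs_cos_le_one DERIV_cos])
  then show ?thesis
    by simp
qed

lemma e_in_terms_of_r_s: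
  assumes k: "1 \<le> k"
  shows "e k = s k + real k * r k - real (k + 1) * r (k + 2)"
proof -
  have "sech x ^ k * ((deriv T x * tanh x + sech x ^ 2 * T x) * cos x + T x * tanh x * - sin x
        - real k * tanh x * (T x * tanh x) * cos x)
      = sech x ^ k * tanh x * deriv T x * cos x + real (k + 1) * (sech x ^ (k + 2) * T x * cos x)
        - real k * (sech x ^ k * T x * cos x) - sech x ^ k * T x * tanh x * sin x" for x
  proof -
    define u where "u = sech x ^ k"
    show ?thesis
      unfolding power_add of_nat_add of_nat_1 u_def[symmetric] using tanh_square[of x] by algebra
  qed
  moreover have "((\<lambda>x. sech x ^ k * tanh x * deriv T x * cos x
      + real (k + 1) * (sech x ^ (k + 2) * T x * cos x) - real k * (sech x ^ k * T x * cos x)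
      - sech x ^ k * T x * tanh x * sin x)
      has_integral e k + real (k + 1) * r (k + 2) - real k * r k - s k) UNIV"
    using k by (intro has_integral_diff has_integral_add has_integral_mult_right has_integral_e
        has_integral_r has_integral_s) auto
  ultimately have "e k + real (k + 1) * r (k + 2) - real k * r k - s k = 0"
    by (rule sech_power_by_parts[OF k
          linear_growth_mult_bounded[OF linear_growth_T continuous_on_tanh_real abs_tanh_le_1]
          DERIV_mult[OF has_real_derivative_T has_real_derivative_tanh]
          continuous_on_cos[OF continuous_on_id] abs_cos_le_one DERIV_cos])
  then show ?thesis
    by simp
qed

lemma f_in_terms_of_r_s:
  assumes k: "1 \<le> k"
  shows "f k = - r k + real k * s k"
proof -
  have "sech x ^ k * (deriv T x * sin x + T x * cos x - real k * tanh x * T x * sin x)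
      = sech x ^ k * deriv T x * sin x + sech x ^ k * T x * cos x
        - real k * (sech x ^ k * T x * tanh x * sin x)" for x
    by (simp add: algebra_simps)
  moreover have "((\<lambda>x. sech x ^ k * deriv T x * sin x + sech x ^ k * T x * cos x
      - real k * (sech x ^ k * T x * tanh x * sin x)) has_integral f k + r k - real k * s k) UNIV"
    using k by (intro has_integral_diff has_integral_add has_integral_mult_right has_integral_f
        has_integral_r has_integral_s) auto
  ultimately have "f k + r k - real k * s k = 0"
    by (rule sech_power_by_parts[OF k linear_growth_T has_real_derivative_T
          continuous_on_sin[OF continuous_on_id] abs_sin_le_one DERIV_sin])
  then show ?thesis
    by simp
qed

theorem lemma2p19:
  fixes k :: nat
  assumes "k \<ge> 1"
  shows "b k = real (k + 1) * p (k + 2) - real k * p k \<and>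
         c k = real (k + 1) * q (k + 2) - real k * q k + p (k + 2) - p k \<and>
         d k = - real k * a k + p k \<and>
         e k = s k + real k * r k - real (k + 1) * r (k + 2) \<and>
         f k = - r k + real k * s k"
  using b_in_terms_of_p[OF assms] c_in_terms_of_q_p[OF assms] d_in_terms_of_a_p[OF assms]
    e_in_terms_of_r_s[OF assms] f_in_terms_of_r_s[OF assms]
  by blast

end
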